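(* Let $L_1,L_2>0$, $\Omega=(0,L_1)\times(0,L_2)$, and $\alpha_1,\alpha_2,\beta_1,\beta_2\in\mathbb{R}$ with $\alpha_1,\alpha_2>0$ and $\alpha_2\beta_1-\alpha_1\beta_2\ne0$. Let $\mathcal{T}\Theta=T_1\Theta_x+T_2\Theta_y$ with $T_1=\begin{pmatrix}\alpha_1&\beta_1\\ \beta_1&-\alpha_1\end{pmatrix}$, $T_2=\begin{pmatrix}\alpha_2&\beta_2\\ \beta_2&-\alpha_2\end{pmatrix}$, on the domain $\mathcal{D}(\mathcal{T})=V$ described in the context. Then $\mathcal{T}$ is positive: $\langle\mathcal{T}\Theta,\Theta\rangle_{L^2(\Omega)^2}\ge0$ for every $\Theta\in\mathcal{D}(\mathcal{T})=V$.
   Context: $\Gamma_W=\{x=0\}$, $\Gamma_E=\{x=L_1\}$, $\Gamma_S=\{y=0\}$, $\Gamma_N=\{y=L_2\}$. $\mathcal{D}(\mathcal{T})=\{\Theta\in L^2(\Omega)^2:\ \mathcal{T}\Theta\in L^2(\Omega)^2,\ \theta_1=0\text{ on }\Gamma_W\cup\Gamma_S,\ \theta_2=0\text{ on }\Gamma_E\cup\Gamma_N\}$ and $V=\{\Theta\in H^1(\Omega)^2:\ \theta_1=0\text{ on }\Gamma_W\cup\Gamma_S,\ \theta_2=0\text{ on }\Gamma_E\cup\Gamma_N\}$; these two spaces coincide under the stated hypotheses. *)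

theory Defs
  imports "HOL-Analysis.Analysis"
begin

definition Omega :: "real \<Rightarrow> real \<Rightarrow> (real \<times> real) set" where
  "Omega L1 L2 = {0<..<L1} \<times> {0<..<L2}"

definition px :: "(real \<times> real \<Rightarrow> real) \<Rightarrow> real \<times> real \<Rightarrow> real" where
  "px \<phi> p = deriv (\<lambda>t. \<phi> (t, snd p)) (fst p)"

definition py :: "(real \<times> real \<Rightarrow> real) \<Rightarrow> real \<times> real \<Rightarrow> real" where
  "py \<phi> p = deriv (\<lambda>t. \<phi> (fst p, t)) (snd p)"

definition C1_fun :: "(real \<times> real \<Rightarrow> real) \<Rightarrow> bool" where
  "C1_fun \<phi> \<longleftrightarrow> continuous_on UNIV \<phi> \<and>
     (\<forall>p. (\<lambda>t. \<phi> (t, snd p)) differentiable (at (fst p)) \<and>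
          (\<lambda>t. \<phi> (fst p, t)) differentiable (at (snd p))) \<and>
     continuous_on UNIV (px \<phi>) \<and> continuous_on UNIV (py \<phi>)"

definition test_fun :: "(real \<times> real) set \<Rightarrow> (real \<times> real \<Rightarrow> real) \<Rightarrow> bool" where
  "test_fun U \<phi> \<longleftrightarrow> C1_fun \<phi> \<and> compact (closure {p. \<phi> p \<noteq> 0}) \<and>
     closure {p. \<phi> p \<noteq> 0} \<subseteq> U"

definition L2_on :: "(real \<times> real) set \<Rightarrow> (real \<times> real \<Rightarrow> real) \<Rightarrow> bool" where
  "L2_on U f \<longleftrightarrow> set_borel_measurable lborel U f \<and>
     set_integrable lborel U (\<lambda>p. (f p)\<^sup>2)"

definition weak_dx :: "(real \<times> real) set \<Rightarrow> (real \<times> real \<Rightarrow> real) \<Rightarrow> (real \<times> real \<Rightarrow> real) \<Rightarrow> bool" where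
  "weak_dx U f g \<longleftrightarrow> (\<forall>\<phi>. test_fun U \<phi> \<longrightarrow>
     (LINT p:U|lborel. f p * px \<phi> p) = - (LINT p:U|lborel. g p * \<phi> p))"

definition weak_dy :: "(real \<times> real) set \<Rightarrow> (real \<times> real \<Rightarrow> real) \<Rightarrow> (real \<times> real \<Rightarrow> real) \<Rightarrow> bool" where
  "weak_dy U f g \<longleftrightarrow> (\<forall>\<phi>. test_fun U \<phi> \<longrightarrow>
     (LINT p:U|lborel. f p * py \<phi> p) = - (LINT p:U|lborel. g p * \<phi> p))"

definition H1_dist :: "(real \<times> real) set \<Rightarrow> (real \<times> real \<Rightarrow> real) \<Rightarrow> (real \<times> real \<Rightarrow> real)
    \<Rightarrow> (real \<times> real \<Rightarrow> real) \<Rightarrow> (real \<times> real \<Rightarrow> real) \<Rightarrow> real" where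
  "H1_dist U f gx gy \<phi> = (LINT p:U|lborel. (f p - \<phi> p)\<^sup>2) + (LINT p:U|lborel. (gx p - px \<phi> p)\<^sup>2)
      + (LINT p:U|lborel. (gy p - py \<phi> p)\<^sup>2)"

text \<open>Vanishing trace on a boundary segment parametrised by arclength \<gamma> on [a,b]:
  trace f is the L^2 limit of the boundary values of C^1 functions converging to f in H^1.\<close>
definition zero_trace :: "(real \<times> real) set \<Rightarrow> (real \<times> real \<Rightarrow> real) \<Rightarrow> (real \<times> real \<Rightarrow> real)
    \<Rightarrow> (real \<times> real \<Rightarrow> real) \<Rightarrow> (real \<Rightarrow> real \<times> real) \<Rightarrow> real \<Rightarrow> real \<Rightarrow> bool" where
  "zero_trace U f gx gy \<gamma> a b \<longleftrightarrow> (\<exists>\<phi>s :: nat \<Rightarrow> real \<times> real \<Rightarrow> real.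
     (\<forall>n. C1_fun (\<phi>s n)) \<and>
     (\<lambda>n. H1_dist U f gx gy (\<phi>s n)) \<longlonglongrightarrow> 0 \<and>
     (\<lambda>n. integral {a..b} (\<lambda>s. (\<phi>s n (\<gamma> s))\<^sup>2)) \<longlonglongrightarrow> 0)"

end

theory Submission
  imports Defs
begin

text \<open>For \<open>C\<^sup>1\<close> fields \<open>w = (u, v)\<close> the \<open>x\<close>-part \<open>\<langle>T\<^sub>1 w\<^sub>x, w\<rangle>\<close> of the integrand is the
  \<open>x\<close>-derivative of \<open>q(w) = \<langle>T\<^sub>1 w, w\<rangle> / 2 = \<alpha>\<^sub>1 (u\<^sup>2 - v\<^sup>2) / 2 + \<beta>\<^sub>1 u v\<close>, because \<open>T\<^sub>1\<close> is
  symmetric. Integrating in \<open>x\<close> leaves \<open>q\<close> on \<open>\<Gamma>\<^sub>E\<close> minus \<open>q\<close> on \<open>\<Gamma>\<^sub>W\<close>, and completing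
  the square gives \<open>q(w) \<ge> -K v\<^sup>2\<close> and \<open>q(w) \<le> K u\<^sup>2\<close>: the boundary terms are bounded below by
  \<open>-K\<close> times the squared traces of \<open>\<theta>\<^sub>2\<close> on \<open>\<Gamma>\<^sub>E\<close> and of \<open>\<theta>\<^sub>1\<close> on \<open>\<Gamma>\<^sub>W\<close>, precisely the ones
  that vanish. Approximating \<open>\<theta>\<^sub>1\<close> and \<open>\<theta>\<^sub>2\<close> in \<open>H\<^sup>1\<close> by \<open>C\<^sup>1\<close> functions with these traces
  tending to zero and passing to the limit in the bilinear integral shows that the \<open>x\<close>-part is
  nonnegative; the \<open>y\<close>-part is the same argument with \<open>\<Gamma>\<^sub>N\<close> and \<open>\<Gamma>\<^sub>S\<close>.\<close>

section \<open>Square-integrable functions\<close>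

definition square_integrable :: "'a measure \<Rightarrow> ('a \<Rightarrow> real) \<Rightarrow> bool" where
  "square_integrable M f \<longleftrightarrow> f \<in> borel_measurable M \<and> integrable M (\<lambda>x. (f x)\<^sup>2)"

lemma square_integrable_mult:
  assumes "square_integrable M f" "square_integrable M g"
  shows "integrable M (\<lambda>x. f x * g x)"
proof (rule Bochner_Integration.integrable_bound[where f="\<lambda>x. (f x)\<^sup>2 + (g x)\<^sup>2"])
  show "integrable M (\<lambda>x. (f x)\<^sup>2 + (g x)\<^sup>2)"
    using assms unfolding square_integrable_def by simp
  show "(\<lambda>x. f x * g x) \<in> borel_measurable M"
    using assms unfolding square_integrable_def by (auto intro: borel_measurable_times)
  show "AE x in M. norm (f x * g x) \<le> norm ((f x)\<^sup>2 + (g x)\<^sup>2)"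
  proof (rule AE_I2)
    fix x
    have "2 * \<bar>f x\<bar> * \<bar>g x\<bar> \<le> (f x)\<^sup>2 + (g x)\<^sup>2"
      using sum_squares_bound[of "\<bar>f x\<bar>" "\<bar>g x\<bar>"] by simp
    moreover have "0 \<le> \<bar>f x\<bar> * \<bar>g x\<bar>"
      by simp
    ultimately have "\<bar>f x\<bar> * \<bar>g x\<bar> \<le> (f x)\<^sup>2 + (g x)\<^sup>2"
      by linarith
    then show "norm (f x * g x) \<le> norm ((f x)\<^sup>2 + (g x)\<^sup>2)"
      by (simp add: abs_mult)
  qed
qed

lemma square_integrable_diff:
  assumes "square_integrable M f" "square_integrable M g"
  shows "square_integrable M (\<lambda>x. f x - g x)"
proof -
  have "integrable M (\<lambda>x. (f x)\<^sup>2 + (g x)\<^sup>2 - 2 * (f x * g x))"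
    using assms square_integrable_mult[OF assms] unfolding square_integrable_def by simp
  then show ?thesis
    using assms unfolding square_integrable_def by (simp add: power2_diff mult.assoc borel_measurable_diff)
qed

lemma quadratic_nonneg_imp_discriminant_le:
  fixes a b c :: real
  assumes "a \<ge> 0" "\<And>t. 0 \<le> a * t\<^sup>2 + 2 * b * t + c"
  shows "b\<^sup>2 \<le> a * c"
proof (cases "a = 0")
  case True
  have "b = 0"
  proof (rule ccontr)
    assume "b \<noteq> 0"
    have "0 \<le> a * (-(c + 1) / (2 * b))\<^sup>2 + 2 * b * (-(c + 1) / (2 * b)) + c"
      by (rule assms(2))
    with True \<open>b \<noteq> 0\<close> show False by simp
  qed
  with True show ?thesis by simp
next
  case False
  have "0 \<le> a * (-b / a)\<^sup>2 + 2 * b * (-b / a) + c"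
    by (rule assms(2))
  with False assms(1) show ?thesis
    by (simp add: field_simps power2_eq_square)
qed

lemma Cauchy_Schwarz_integral:
  assumes "square_integrable M f" "square_integrable M g"
  shows "(\<integral>x. f x * g x \<partial>M)\<^sup>2 \<le> (\<integral>x. (f x)\<^sup>2 \<partial>M) * (\<integral>x. (g x)\<^sup>2 \<partial>M)"
proof (rule quadratic_nonneg_imp_discriminant_le)
  show "0 \<le> (\<integral>x. (f x)\<^sup>2 \<partial>M)" by simp
  fix t :: real
  have "0 \<le> (\<integral>x. (t * f x + g x)\<^sup>2 \<partial>M)"
    by simp
  also have "\<dots> = (\<integral>x. t\<^sup>2 * (f x)\<^sup>2 + 2 * t * (f x * g x) + (g x)\<^sup>2 \<partial>M)"
    by (simp add: power2_eq_square algebra_simps)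
  also have "\<dots> = t\<^sup>2 * (\<integral>x. (f x)\<^sup>2 \<partial>M) + 2 * t * (\<integral>x. f x * g x \<partial>M) + (\<integral>x. (g x)\<^sup>2 \<partial>M)"
    using assms square_integrable_mult[OF assms] unfolding square_integrable_def by simp
  finally show "0 \<le> (\<integral>x. (f x)\<^sup>2 \<partial>M) * t\<^sup>2 + 2 * (\<integral>x. f x * g x \<partial>M) * t + (\<integral>x. (g x)\<^sup>2 \<partial>M)"
    by (simp add: mult_ac)
qed

lemma integral_mult_tendsto_0:
  assumes "\<And>n. square_integrable M (f n)" "\<And>n. square_integrable M (g n)"
    and "(\<lambda>n. (\<integral>x. (f n x)\<^sup>2 \<partial>M) * (\<integral>x. (g n x)\<^sup>2 \<partial>M)) \<longlonglongrightarrow> 0"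
  shows "(\<lambda>n. \<integral>x. f n x * g n x \<partial>M) \<longlonglongrightarrow> 0"
proof (rule Lim_null_comparison)
  show "\<forall>\<^sub>F n in sequentially.
      norm (\<integral>x. f n x * g n x \<partial>M) \<le> sqrt ((\<integral>x. (f n x)\<^sup>2 \<partial>M) * (\<integral>x. (g n x)\<^sup>2 \<partial>M))"
    using Cauchy_Schwarz_integral[OF assms(1,2)]
    by (intro always_eventually allI) (metis real_norm_def real_sqrt_abs real_sqrt_le_mono)
  show "(\<lambda>n. sqrt ((\<integral>x. (f n x)\<^sup>2 \<partial>M) * (\<integral>x. (g n x)\<^sup>2 \<partial>M))) \<longlonglongrightarrow> 0"
    using tendsto_real_sqrt[OF assms(3)] by simp
qed

definition L2_tendsto :: "'a measure \<Rightarrow> (nat \<Rightarrow> 'a \<Rightarrow> real) \<Rightarrow> ('a \<Rightarrow> real) \<Rightarrow> bool" where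
  "L2_tendsto M fs f \<longleftrightarrow> (\<forall>n. square_integrable M (fs n)) \<and> square_integrable M f \<and>
     (\<lambda>n. \<integral>x. (fs n x - f x)\<^sup>2 \<partial>M) \<longlonglongrightarrow> 0"

lemma L2_tendsto_integral_mult:
  assumes f: "L2_tendsto M fs f" and g: "L2_tendsto M gs g"
  shows "(\<lambda>n. \<integral>x. fs n x * gs n x \<partial>M) \<longlonglongrightarrow> (\<integral>x. f x * g x \<partial>M)"
proof -
  define a where "a n x = fs n x - f x" for n x
  define b where "b n x = gs n x - g x" for n x
  have sf: "square_integrable M f" and sg: "square_integrable M g"
    using f g unfolding L2_tendsto_def by auto
  have sa: "square_integrable M (a n)" and sb: "square_integrable M (b n)" for n
    using f g unfolding L2_tendsto_def a_def b_def by (auto intro: square_integrable_diff)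
  have a0: "(\<lambda>n. \<integral>x. (a n x)\<^sup>2 \<partial>M) \<longlonglongrightarrow> 0" and b0: "(\<lambda>n. \<integral>x. (b n x)\<^sup>2 \<partial>M) \<longlonglongrightarrow> 0"
    using f g unfolding L2_tendsto_def a_def b_def by auto
  have "(\<integral>x. fs n x * gs n x \<partial>M) = (\<integral>x. a n x * b n x \<partial>M) + (\<integral>x. a n x * g x \<partial>M)
      + (\<integral>x. f x * b n x \<partial>M) + (\<integral>x. f x * g x \<partial>M)" for n
  proof -
    have "(\<integral>x. fs n x * gs n x \<partial>M) = (\<integral>x. a n x * b n x + a n x * g x + f x * b n x + f x * g x \<partial>M)"
      by (simp add: a_def b_def algebra_simps)
    then show ?thesis
      using sa sb sf sg by (simp add: square_integrable_mult)
  qed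
  moreover have "(\<lambda>n. \<integral>x. a n x * b n x \<partial>M) \<longlonglongrightarrow> 0"
    using sa sb tendsto_mult[OF a0 b0] by (intro integral_mult_tendsto_0) simp_all
  moreover have "(\<lambda>n. \<integral>x. a n x * g x \<partial>M) \<longlonglongrightarrow> 0"
    using sa sg tendsto_mult[OF a0 tendsto_const] by (intro integral_mult_tendsto_0) simp_all
  moreover have "(\<lambda>n. \<integral>x. f x * b n x \<partial>M) \<longlonglongrightarrow> 0"
    using sf sb tendsto_mult[OF tendsto_const b0] by (intro integral_mult_tendsto_0) simp_all
  ultimately have "(\<lambda>n. \<integral>x. fs n x * gs n x \<partial>M) \<longlonglongrightarrow> 0 + 0 + 0 + (\<integral>x. f x * g x \<partial>M)"
    by (simp only:) (intro tendsto_add tendsto_const)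
  then show ?thesis by simp
qed

section \<open>The symmetric form of \<open>T\<close>\<close>

text \<open>\<open>T_inner \<alpha> \<beta> a b c d\<close> is \<open>\<langle>T (a, b), (c, d)\<rangle>\<close> for the symmetric matrix
  \<open>T = [[\<alpha>, \<beta>], [\<beta>, -\<alpha>]]\<close>.\<close>
definition T_inner :: "real \<Rightarrow> real \<Rightarrow> real \<Rightarrow> real \<Rightarrow> real \<Rightarrow> real \<Rightarrow> real" where
  "T_inner \<alpha> \<beta> a b c d = (\<alpha> * a + \<beta> * b) * c + (\<beta> * a - \<alpha> * b) * d"

lemma T_inner_expand:
  "T_inner \<alpha> \<beta> a b c d = \<alpha> * (a * c) + \<beta> * (b * c) + \<beta> * (a * d) - \<alpha> * (b * d)"
  by (simp add: T_inner_def algebra_simps)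

lemma T_inner_diag_bounds:
  assumes "\<alpha> > 0"
  shows "-(\<beta>\<^sup>2 / (2 * \<alpha>) + \<alpha> / 2) * v\<^sup>2 \<le> T_inner \<alpha> \<beta> u v u v / 2"
    and "T_inner \<alpha> \<beta> u v u v / 2 \<le> (\<beta>\<^sup>2 / (2 * \<alpha>) + \<alpha> / 2) * u\<^sup>2"
proof -
  have "T_inner \<alpha> \<beta> u v u v / 2 + (\<beta>\<^sup>2 / (2 * \<alpha>) + \<alpha> / 2) * v\<^sup>2 = \<alpha> / 2 * (u + \<beta> * v / \<alpha>)\<^sup>2"
    and "(\<beta>\<^sup>2 / (2 * \<alpha>) + \<alpha> / 2) * u\<^sup>2 - T_inner \<alpha> \<beta> u v u v / 2 = \<alpha> / 2 * (v - \<beta> * u / \<alpha>)\<^sup>2"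
    using assms by (simp_all add: T_inner_def field_simps power2_eq_square)
  moreover have "0 \<le> \<alpha> / 2 * (u + \<beta> * v / \<alpha>)\<^sup>2" "0 \<le> \<alpha> / 2 * (v - \<beta> * u / \<alpha>)\<^sup>2"
    using assms by simp_all
  ultimately show "-(\<beta>\<^sup>2 / (2 * \<alpha>) + \<alpha> / 2) * v\<^sup>2 \<le> T_inner \<alpha> \<beta> u v u v / 2"
    and "T_inner \<alpha> \<beta> u v u v / 2 \<le> (\<beta>\<^sup>2 / (2 * \<alpha>) + \<alpha> / 2) * u\<^sup>2"
    by linarith+
qed

text \<open>Since \<open>T\<close> is symmetric, \<open>\<langle>T w', w\<rangle>\<close> is the derivative of \<open>\<langle>T w, w\<rangle> / 2\<close>.\<close>
lemma integral_T_inner_deriv: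
  fixes u v u' v' :: "real \<Rightarrow> real"
  assumes "a \<le> b"
    and "\<And>t. (u has_real_derivative u' t) (at t)" "\<And>t. (v has_real_derivative v' t) (at t)"
  shows "integral {a..b} (\<lambda>t. T_inner \<alpha> \<beta> (u' t) (v' t) (u t) (v t))
    = T_inner \<alpha> \<beta> (u b) (v b) (u b) (v b) / 2 - T_inner \<alpha> \<beta> (u a) (v a) (u a) (v a) / 2"
proof -
  have "((\<lambda>t. T_inner \<alpha> \<beta> (u t) (v t) (u t) (v t) / 2) has_real_derivative
      T_inner \<alpha> \<beta> (u' t) (v' t) (u t) (v t)) (at t)" for t
    unfolding T_inner_def
    by (auto intro!: derivative_eq_intros assms(2,3) simp: field_simps)
  then have "((\<lambda>t. T_inner \<alpha> \<beta> (u' t) (v' t) (u t) (v t)) has_integral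
      T_inner \<alpha> \<beta> (u b) (v b) (u b) (v b) / 2 - T_inner \<alpha> \<beta> (u a) (v a) (u a) (v a) / 2) {a..b}"
    using assms(1)
    by (intro fundamental_theorem_of_calculus)
      (auto simp: has_real_derivative_iff_has_vector_derivative intro: has_vector_derivative_at_within)
  then show ?thesis
    by (rule integral_unique)
qed

lemma square_integrable_T_inner:
  assumes "square_integrable M a" "square_integrable M b" "square_integrable M c" "square_integrable M d"
  shows "integrable M (\<lambda>x. T_inner \<alpha> \<beta> (a x) (b x) (c x) (d x))"
    and "(\<integral>x. T_inner \<alpha> \<beta> (a x) (b x) (c x) (d x) \<partial>M) = \<alpha> * (\<integral>x. a x * c x \<partial>M)
      + \<beta> * (\<integral>x. b x * c x \<partial>M) + \<beta> * (\<integral>x. a x * d x \<partial>M) - \<alpha> * (\<integral>x. b x * d x \<partial>M)"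
  using assms by (simp_all add: T_inner_expand square_integrable_mult)

lemma L2_tendsto_integral_T_inner:
  assumes "L2_tendsto M as a" "L2_tendsto M bs b" "L2_tendsto M cs c" "L2_tendsto M ds d"
  shows "(\<lambda>n. \<integral>x. T_inner \<alpha> \<beta> (as n x) (bs n x) (cs n x) (ds n x) \<partial>M)
    \<longlonglongrightarrow> (\<integral>x. T_inner \<alpha> \<beta> (a x) (b x) (c x) (d x) \<partial>M)"
proof -
  have "square_integrable M (as n)" "square_integrable M (bs n)"
    "square_integrable M (cs n)" "square_integrable M (ds n)" for n
    using assms unfolding L2_tendsto_def by auto
  moreover have "square_integrable M a" "square_integrable M b" "square_integrable M c" "square_integrable M d"
    using assms unfolding L2_tendsto_def by auto
  ultimately show ?thesis
    by (simp only: square_integrable_T_inner(2))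
      (intro tendsto_intros L2_tendsto_integral_mult assms)
qed

lemma L2_tendsto_integral_T_inner_nonneg:
  assumes "L2_tendsto M as a" "L2_tendsto M bs b" "L2_tendsto M cs c" "L2_tendsto M ds d"
    and "\<And>n. - e n \<le> (\<integral>x. T_inner \<alpha> \<beta> (as n x) (bs n x) (cs n x) (ds n x) \<partial>M)"
    and "e \<longlonglongrightarrow> 0"
  shows "0 \<le> (\<integral>x. T_inner \<alpha> \<beta> (a x) (b x) (c x) (d x) \<partial>M)"
proof -
  have "(\<lambda>n. - e n) \<longlonglongrightarrow> - 0"
    using assms(6) by (rule tendsto_minus)
  then have "- 0 \<le> (\<integral>x. T_inner \<alpha> \<beta> (a x) (b x) (c x) (d x) \<partial>M)"
    by (rule LIMSEQ_le[OF _ L2_tendsto_integral_T_inner[OF assms(1-4)]]) (use assms(5) in auto)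
  then show ?thesis
    by simp
qed

lemma integral_integral_T_inner_lower_bound:
  fixes U V U' V' :: "real \<Rightarrow> real \<Rightarrow> real"
  assumes "a \<le> b" "\<alpha> > 0"
    and "\<And>s t. (U s has_real_derivative U' s t) (at t)" "\<And>s t. (V s has_real_derivative V' s t) (at t)"
    and "continuous_on {c..d} (\<lambda>s. U s a)" "continuous_on {c..d} (\<lambda>s. U s b)"
    and "continuous_on {c..d} (\<lambda>s. V s a)" "continuous_on {c..d} (\<lambda>s. V s b)"
  shows "-(\<beta>\<^sup>2 / (2 * \<alpha>) + \<alpha> / 2) * (integral {c..d} (\<lambda>s. (V s b)\<^sup>2) + integral {c..d} (\<lambda>s. (U s a)\<^sup>2))
    \<le> integral {c..d} (\<lambda>s. integral {a..b} (\<lambda>t. T_inner \<alpha> \<beta> (U' s t) (V' s t) (U s t) (V s t)))"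
proof -
  define K where "K = \<beta>\<^sup>2 / (2 * \<alpha>) + \<alpha> / 2"
  define q where "q s t = T_inner \<alpha> \<beta> (U s t) (V s t) (U s t) (V s t) / 2" for s t
  have int_sq: "(\<lambda>s. (V s b)\<^sup>2) integrable_on {c..d}" "(\<lambda>s. (U s a)\<^sup>2) integrable_on {c..d}"
    using assms(5-8) by (auto intro!: integrable_continuous_interval continuous_intros)
  have "-K * (integral {c..d} (\<lambda>s. (V s b)\<^sup>2) + integral {c..d} (\<lambda>s. (U s a)\<^sup>2))
      = integral {c..d} (\<lambda>s. -K * ((V s b)\<^sup>2 + (U s a)\<^sup>2))"
    using int_sq by (simp add: integral_add)
  also have "\<dots> \<le> integral {c..d} (\<lambda>s. q s b - q s a)"
  proof (rule integral_le)
    show "(\<lambda>s. -K * ((V s b)\<^sup>2 + (U s a)\<^sup>2)) integrable_on {c..d}"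
      using assms(5-8) by (auto intro!: integrable_continuous_interval continuous_intros)
    show "(\<lambda>s. q s b - q s a) integrable_on {c..d}"
      unfolding q_def T_inner_def using assms(5-8)
      by (auto intro!: integrable_continuous_interval continuous_intros)
    show "-K * ((V s b)\<^sup>2 + (U s a)\<^sup>2) \<le> q s b - q s a" for s
    proof -
      have "-K * (V s b)\<^sup>2 \<le> q s b" "q s a \<le> K * (U s a)\<^sup>2"
        unfolding K_def q_def using T_inner_diag_bounds[OF assms(2)] by blast+
      then show ?thesis
        unfolding distrib_left by linarith
    qed
  qed
  also have "\<dots> = integral {c..d} (\<lambda>s. integral {a..b} (\<lambda>t. T_inner \<alpha> \<beta> (U' s t) (V' s t) (U s t) (V s t)))"
    unfolding q_def using integral_T_inner_deriv[OF assms(1,3,4)] by simp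
  finally show ?thesis
    unfolding K_def .
qed

section \<open>The rectangle\<close>

abbreviation Omega_measure :: "real \<Rightarrow> real \<Rightarrow> (real \<times> real) measure" where
  "Omega_measure L1 L2 \<equiv> restrict_space lborel (Omega L1 L2)"

lemma Omega_eq_box: "Omega L1 L2 = box (0, 0) (L1, L2)"
  by (auto simp: Omega_def mem_box Basis_prod_def)

lemma Omega_sets [measurable, simp]: "Omega L1 L2 \<in> sets borel"
  unfolding Omega_eq_box by (simp add: borel_open)

lemma set_integral_Omega:
  fixes f :: "real \<times> real \<Rightarrow> real"
  shows "(LINT p:Omega L1 L2|lborel. f p) = (\<integral>p. f p \<partial>Omega_measure L1 L2)"
  unfolding set_lebesgue_integral_def by (subst integral_restrict_space) auto

lemma L2_on_Omega_iff: "L2_on (Omega L1 L2) f \<longleftrightarrow> square_integrable (Omega_measure L1 L2) f"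
  unfolding L2_on_def square_integrable_def set_borel_measurable_def set_integrable_def
  by (simp add: borel_measurable_restrict_space_iff integrable_restrict_space)

lemma continuous_on_Omega_integral:
  fixes f :: "real \<times> real \<Rightarrow> real"
  assumes "continuous_on UNIV f"
  shows "f \<in> borel_measurable (Omega_measure L1 L2)" and "integrable (Omega_measure L1 L2) f"
    and "(\<integral>p. f p \<partial>Omega_measure L1 L2) = integral (cbox (0, 0) (L1, L2)) f"
proof -
  show "f \<in> borel_measurable (Omega_measure L1 L2)"
    using borel_measurable_continuous_onI[OF assms] by (simp add: measurable_restrict_space1)
  have "set_integrable lborel (cbox (0, 0) (L1, L2)) f"
    unfolding set_integrable_def
    by (rule borel_integrable_compact) (auto intro: continuous_on_subset[OF assms])
  then have int: "set_integrable lborel (Omega L1 L2) f"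
    by (rule set_integrable_subset) (auto simp: Omega_eq_box box_subset_cbox)
  then show "integrable (Omega_measure L1 L2) f"
    unfolding set_integrable_def by (simp add: integrable_restrict_space)
  have "(\<integral>p. f p \<partial>Omega_measure L1 L2) = integral (Omega L1 L2) f"
    using set_borel_integral_eq_integral(2)[OF int] by (simp add: set_integral_Omega)
  then show "(\<integral>p. f p \<partial>Omega_measure L1 L2) = integral (cbox (0, 0) (L1, L2)) f"
    by (simp add: Omega_eq_box integral_open_interval)
qed

lemma C1_fun_continuous:
  assumes "C1_fun u"
  shows "continuous_on UNIV u" "continuous_on UNIV (px u)" "continuous_on UNIV (py u)"
  using assms unfolding C1_fun_def by auto

lemma C1_fun_continuous_on_lines:
  assumes "C1_fun u"
  shows "continuous_on S (\<lambda>y. u (x, y))" "continuous_on S (\<lambda>x. u (x, y))"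
  by (rule continuous_on_compose2[OF C1_fun_continuous(1)[OF assms]],
      auto intro!: continuous_on_Pair continuous_on_id continuous_on_const)+

lemma C1_fun_has_px: "C1_fun u \<Longrightarrow> ((\<lambda>t. u (t, y)) has_real_derivative px u (x, y)) (at x)"
  unfolding C1_fun_def px_def by (metis DERIV_deriv_iff_real_differentiable fst_conv snd_conv)

lemma C1_fun_has_py: "C1_fun u \<Longrightarrow> ((\<lambda>t. u (x, t)) has_real_derivative py u (x, y)) (at y)"
  unfolding C1_fun_def py_def by (metis DERIV_deriv_iff_real_differentiable fst_conv snd_conv)

lemma C1_fun_square_integrable:
  assumes "C1_fun u"
  shows "square_integrable (Omega_measure L1 L2) u"
    and "square_integrable (Omega_measure L1 L2) (px u)"
    and "square_integrable (Omega_measure L1 L2) (py u)"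
  using C1_fun_continuous[OF assms] unfolding square_integrable_def
  by (auto intro!: continuous_on_Omega_integral continuous_intros)

lemma integral_T_inner_px_lower_bound:
  assumes "0 \<le> L1" "\<alpha> > 0" "C1_fun u" "C1_fun v"
  shows "-(\<beta>\<^sup>2 / (2 * \<alpha>) + \<alpha> / 2) * (integral {0..L2} (\<lambda>y. (v (L1, y))\<^sup>2) + integral {0..L2} (\<lambda>y. (u (0, y))\<^sup>2))
    \<le> (\<integral>p. T_inner \<alpha> \<beta> (px u p) (px v p) (u p) (v p) \<partial>Omega_measure L1 L2)"
proof -
  define E where "E p = T_inner \<alpha> \<beta> (px u p) (px v p) (u p) (v p)" for p
  note cu = C1_fun_continuous[OF assms(3)] and cv = C1_fun_continuous[OF assms(4)]
  have cE: "continuous_on UNIV E"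
    unfolding E_def T_inner_def using cu cv by (intro continuous_intros)
  have "-(\<beta>\<^sup>2 / (2 * \<alpha>) + \<alpha> / 2) * (integral {0..L2} (\<lambda>y. (v (L1, y))\<^sup>2) + integral {0..L2} (\<lambda>y. (u (0, y))\<^sup>2))
      \<le> integral {0..L2} (\<lambda>y. integral {0..L1} (\<lambda>x. E (x, y)))"
    unfolding E_def
    using assms C1_fun_has_px[OF assms(3)] C1_fun_has_px[OF assms(4)]
    by (intro integral_integral_T_inner_lower_bound[where U = "\<lambda>y x. u (x, y)" and V = "\<lambda>y x. v (x, y)"]
        C1_fun_continuous_on_lines)
  also have "\<dots> = integral (cbox (0, 0) (L1, L2)) E"
    using integral_prod_continuous[OF continuous_on_subset[OF cE]]
      integral_swap_continuous[of 0 0 L1 L2 "\<lambda>x y. E (x, y)"] continuous_on_subset[OF cE]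
    by simp
  also have "\<dots> = (\<integral>p. E p \<partial>Omega_measure L1 L2)"
    by (rule continuous_on_Omega_integral(3)[OF cE, symmetric])
  finally show ?thesis
    unfolding E_def .
qed

lemma integral_T_inner_py_lower_bound:
  assumes "0 \<le> L2" "\<alpha> > 0" "C1_fun u" "C1_fun v"
  shows "-(\<beta>\<^sup>2 / (2 * \<alpha>) + \<alpha> / 2) * (integral {0..L1} (\<lambda>x. (v (x, L2))\<^sup>2) + integral {0..L1} (\<lambda>x. (u (x, 0))\<^sup>2))
    \<le> (\<integral>p. T_inner \<alpha> \<beta> (py u p) (py v p) (u p) (v p) \<partial>Omega_measure L1 L2)"
proof -
  define E where "E p = T_inner \<alpha> \<beta> (py u p) (py v p) (u p) (v p)" for p
  note cu = C1_fun_continuous[OF assms(3)] and cv = C1_fun_continuous[OF assms(4)]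
  have cE: "continuous_on UNIV E"
    unfolding E_def T_inner_def using cu cv by (intro continuous_intros)
  have "-(\<beta>\<^sup>2 / (2 * \<alpha>) + \<alpha> / 2) * (integral {0..L1} (\<lambda>x. (v (x, L2))\<^sup>2) + integral {0..L1} (\<lambda>x. (u (x, 0))\<^sup>2))
      \<le> integral {0..L1} (\<lambda>x. integral {0..L2} (\<lambda>y. E (x, y)))"
    unfolding E_def
    using assms C1_fun_has_py[OF assms(3)] C1_fun_has_py[OF assms(4)]
    by (intro integral_integral_T_inner_lower_bound[where U = "\<lambda>x y. u (x, y)" and V = "\<lambda>x y. v (x, y)"]
        C1_fun_continuous_on_lines)
  also have "\<dots> = integral (cbox (0, 0) (L1, L2)) E"
    using integral_prod_continuous[OF continuous_on_subset[OF cE]] by simp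
  also have "\<dots> = (\<integral>p. E p \<partial>Omega_measure L1 L2)"
    by (rule continuous_on_Omega_integral(3)[OF cE, symmetric])
  finally show ?thesis
    unfolding E_def .
qed

lemma zero_trace_L2_approximation:
  assumes "zero_trace (Omega L1 L2) f fx fy \<gamma> a b"
    and "L2_on (Omega L1 L2) f" "L2_on (Omega L1 L2) fx" "L2_on (Omega L1 L2) fy"
  obtains \<phi> where "\<And>n. C1_fun (\<phi> n)" "L2_tendsto (Omega_measure L1 L2) \<phi> f"
    "L2_tendsto (Omega_measure L1 L2) (\<lambda>n. px (\<phi> n)) fx" "L2_tendsto (Omega_measure L1 L2) (\<lambda>n. py (\<phi> n)) fy"
    "(\<lambda>n. integral {a..b} (\<lambda>s. (\<phi> n (\<gamma> s))\<^sup>2)) \<longlonglongrightarrow> 0"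
proof -
  let ?M = "Omega_measure L1 L2"
  obtain \<phi> where C1: "\<And>n. C1_fun (\<phi> n)" and H1: "(\<lambda>n. H1_dist (Omega L1 L2) f fx fy (\<phi> n)) \<longlonglongrightarrow> 0"
    and trace: "(\<lambda>n. integral {a..b} (\<lambda>s. (\<phi> n (\<gamma> s))\<^sup>2)) \<longlonglongrightarrow> 0"
    using assms(1) unfolding zero_trace_def by blast
  define A where "A n = (\<integral>p. (\<phi> n p - f p)\<^sup>2 \<partial>?M)" for n
  define B where "B n = (\<integral>p. (px (\<phi> n) p - fx p)\<^sup>2 \<partial>?M)" for n
  define C where "C n = (\<integral>p. (py (\<phi> n) p - fy p)\<^sup>2 \<partial>?M)" for n
  have nonneg: "0 \<le> A n" "0 \<le> B n" "0 \<le> C n" for n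
    unfolding A_def B_def C_def by simp_all
  have sum: "(\<lambda>n. A n + B n + C n) \<longlonglongrightarrow> 0"
    using H1 unfolding H1_dist_def set_integral_Omega A_def B_def C_def by (simp add: power2_commute)
  have "A \<longlonglongrightarrow> 0" "B \<longlonglongrightarrow> 0" "C \<longlonglongrightarrow> 0"
    by (rule tendsto_sandwich[OF _ _ tendsto_const sum]; use nonneg in simp)+
  then show ?thesis
    using that C1 trace C1_fun_square_integrable[OF C1] assms(2-4)
    unfolding L2_tendsto_def L2_on_Omega_iff A_def B_def C_def by blast
qed

lemma integral_T_inner_px_nonneg:
  assumes "0 \<le> L1" "\<alpha> > 0"
    and "L2_on (Omega L1 L2) \<theta>1" "L2_on (Omega L1 L2) \<theta>1x" "L2_on (Omega L1 L2) \<theta>1y"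
    and "L2_on (Omega L1 L2) \<theta>2" "L2_on (Omega L1 L2) \<theta>2x" "L2_on (Omega L1 L2) \<theta>2y"
    and "zero_trace (Omega L1 L2) \<theta>1 \<theta>1x \<theta>1y (\<lambda>y. (0, y)) 0 L2"
    and "zero_trace (Omega L1 L2) \<theta>2 \<theta>2x \<theta>2y (\<lambda>y. (L1, y)) 0 L2"
  shows "0 \<le> (\<integral>p. T_inner \<alpha> \<beta> (\<theta>1x p) (\<theta>2x p) (\<theta>1 p) (\<theta>2 p) \<partial>Omega_measure L1 L2)"
proof -
  define K where "K = \<beta>\<^sup>2 / (2 * \<alpha>) + \<alpha> / 2"
  obtain u where u: "\<And>n. C1_fun (u n)" "L2_tendsto (Omega_measure L1 L2) u \<theta>1"
    "L2_tendsto (Omega_measure L1 L2) (\<lambda>n. px (u n)) \<theta>1x"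
    "(\<lambda>n. integral {0..L2} (\<lambda>y. (u n (0, y))\<^sup>2)) \<longlonglongrightarrow> 0"
    using zero_trace_L2_approximation[OF assms(9,3-5)] by blast
  obtain v where v: "\<And>n. C1_fun (v n)" "L2_tendsto (Omega_measure L1 L2) v \<theta>2"
    "L2_tendsto (Omega_measure L1 L2) (\<lambda>n. px (v n)) \<theta>2x"
    "(\<lambda>n. integral {0..L2} (\<lambda>y. (v n (L1, y))\<^sup>2)) \<longlonglongrightarrow> 0"
    using zero_trace_L2_approximation[OF assms(10,6-8)] by blast
  show ?thesis
  proof (rule L2_tendsto_integral_T_inner_nonneg[OF u(3) v(3) u(2) v(2)])
    show "- (K * (integral {0..L2} (\<lambda>y. (v n (L1, y))\<^sup>2) + integral {0..L2} (\<lambda>y. (u n (0, y))\<^sup>2)))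
        \<le> (\<integral>p. T_inner \<alpha> \<beta> (px (u n) p) (px (v n) p) (u n p) (v n p) \<partial>Omega_measure L1 L2)" for n
      using integral_T_inner_px_lower_bound[OF assms(1,2) u(1) v(1)] unfolding K_def by (simp only: mult_minus_left)
    show "(\<lambda>n. K * (integral {0..L2} (\<lambda>y. (v n (L1, y))\<^sup>2) + integral {0..L2} (\<lambda>y. (u n (0, y))\<^sup>2))) \<longlonglongrightarrow> 0"
      using tendsto_mult_right_zero[OF tendsto_add_zero[OF v(4) u(4)]] .
  qed
qed

lemma integral_T_inner_py_nonneg:
  assumes "0 \<le> L2" "\<alpha> > 0"
    and "L2_on (Omega L1 L2) \<theta>1" "L2_on (Omega L1 L2) \<theta>1x" "L2_on (Omega L1 L2) \<theta>1y"
    and "L2_on (Omega L1 L2) \<theta>2" "L2_on (Omega L1 L2) \<theta>2x" "L2_on (Omega L1 L2) \<theta>2y"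
    and "zero_trace (Omega L1 L2) \<theta>1 \<theta>1x \<theta>1y (\<lambda>x. (x, 0)) 0 L1"
    and "zero_trace (Omega L1 L2) \<theta>2 \<theta>2x \<theta>2y (\<lambda>x. (x, L2)) 0 L1"
  shows "0 \<le> (\<integral>p. T_inner \<alpha> \<beta> (\<theta>1y p) (\<theta>2y p) (\<theta>1 p) (\<theta>2 p) \<partial>Omega_measure L1 L2)"
proof -
  define K where "K = \<beta>\<^sup>2 / (2 * \<alpha>) + \<alpha> / 2"
  obtain u where u: "\<And>n. C1_fun (u n)" "L2_tendsto (Omega_measure L1 L2) u \<theta>1"
    "L2_tendsto (Omega_measure L1 L2) (\<lambda>n. py (u n)) \<theta>1y"
    "(\<lambda>n. integral {0..L1} (\<lambda>x. (u n (x, 0))\<^sup>2)) \<longlonglongrightarrow> 0"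
    using zero_trace_L2_approximation[OF assms(9,3-5)] by blast
  obtain v where v: "\<And>n. C1_fun (v n)" "L2_tendsto (Omega_measure L1 L2) v \<theta>2"
    "L2_tendsto (Omega_measure L1 L2) (\<lambda>n. py (v n)) \<theta>2y"
    "(\<lambda>n. integral {0..L1} (\<lambda>x. (v n (x, L2))\<^sup>2)) \<longlonglongrightarrow> 0"
    using zero_trace_L2_approximation[OF assms(10,6-8)] by blast
  show ?thesis
  proof (rule L2_tendsto_integral_T_inner_nonneg[OF u(3) v(3) u(2) v(2)])
    show "- (K * (integral {0..L1} (\<lambda>x. (v n (x, L2))\<^sup>2) + integral {0..L1} (\<lambda>x. (u n (x, 0))\<^sup>2)))
        \<le> (\<integral>p. T_inner \<alpha> \<beta> (py (u n) p) (py (v n) p) (u n p) (v n p) \<partial>Omega_measure L1 L2)" for n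
      using integral_T_inner_py_lower_bound[OF assms(1,2) u(1) v(1)] unfolding K_def by (simp only: mult_minus_left)
    show "(\<lambda>n. K * (integral {0..L1} (\<lambda>x. (v n (x, L2))\<^sup>2) + integral {0..L1} (\<lambda>x. (u n (x, 0))\<^sup>2))) \<longlonglongrightarrow> 0"
      using tendsto_mult_right_zero[OF tendsto_add_zero[OF v(4) u(4)]] .
  qed
qed

theorem theorem4p2:
  fixes L1 L2 \<alpha>1 \<alpha>2 \<beta>1 \<beta>2 :: real
    and \<theta>1 \<theta>1x \<theta>1y \<theta>2 \<theta>2x \<theta>2y :: "real \<times> real \<Rightarrow> real"
  assumes "L1 > 0" and "L2 > 0" and "\<alpha>1 > 0" and "\<alpha>2 > 0"
    and "\<alpha>2 * \<beta>1 - \<alpha>1 * \<beta>2 \<noteq> 0"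
    and "L2_on (Omega L1 L2) \<theta>1" and "L2_on (Omega L1 L2) \<theta>1x" and "L2_on (Omega L1 L2) \<theta>1y"
    and "L2_on (Omega L1 L2) \<theta>2" and "L2_on (Omega L1 L2) \<theta>2x" and "L2_on (Omega L1 L2) \<theta>2y"
    and "weak_dx (Omega L1 L2) \<theta>1 \<theta>1x" and "weak_dy (Omega L1 L2) \<theta>1 \<theta>1y"
    and "weak_dx (Omega L1 L2) \<theta>2 \<theta>2x" and "weak_dy (Omega L1 L2) \<theta>2 \<theta>2y"
    and "zero_trace (Omega L1 L2) \<theta>1 \<theta>1x \<theta>1y (\<lambda>y. (0, y)) 0 L2"
    and "zero_trace (Omega L1 L2) \<theta>1 \<theta>1x \<theta>1y (\<lambda>x. (x, 0)) 0 L1"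
    and "zero_trace (Omega L1 L2) \<theta>2 \<theta>2x \<theta>2y (\<lambda>y. (L1, y)) 0 L2"
    and "zero_trace (Omega L1 L2) \<theta>2 \<theta>2x \<theta>2y (\<lambda>x. (x, L2)) 0 L1"
  shows "(LINT p:Omega L1 L2|lborel.
            (\<alpha>1 * \<theta>1x p + \<beta>1 * \<theta>2x p + \<alpha>2 * \<theta>1y p + \<beta>2 * \<theta>2y p) * \<theta>1 p
          + (\<beta>1 * \<theta>1x p - \<alpha>1 * \<theta>2x p + \<beta>2 * \<theta>1y p - \<alpha>2 * \<theta>2y p) * \<theta>2 p) \<ge> 0"
proof -
  let ?M = "Omega_measure L1 L2"
  have L2: "square_integrable ?M \<theta>1" "square_integrable ?M \<theta>1x" "square_integrable ?M \<theta>1y"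
    "square_integrable ?M \<theta>2" "square_integrable ?M \<theta>2x" "square_integrable ?M \<theta>2y"
    using assms(6-11) by (simp_all add: L2_on_Omega_iff)
  have "(LINT p:Omega L1 L2|lborel.
            (\<alpha>1 * \<theta>1x p + \<beta>1 * \<theta>2x p + \<alpha>2 * \<theta>1y p + \<beta>2 * \<theta>2y p) * \<theta>1 p
          + (\<beta>1 * \<theta>1x p - \<alpha>1 * \<theta>2x p + \<beta>2 * \<theta>1y p - \<alpha>2 * \<theta>2y p) * \<theta>2 p)
      = (\<integral>p. T_inner \<alpha>1 \<beta>1 (\<theta>1x p) (\<theta>2x p) (\<theta>1 p) (\<theta>2 p)
          + T_inner \<alpha>2 \<beta>2 (\<theta>1y p) (\<theta>2y p) (\<theta>1 p) (\<theta>2 p) \<partial>?M)"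
    by (simp add: set_integral_Omega T_inner_def algebra_simps)
  also have "\<dots> = (\<integral>p. T_inner \<alpha>1 \<beta>1 (\<theta>1x p) (\<theta>2x p) (\<theta>1 p) (\<theta>2 p) \<partial>?M)
      + (\<integral>p. T_inner \<alpha>2 \<beta>2 (\<theta>1y p) (\<theta>2y p) (\<theta>1 p) (\<theta>2 p) \<partial>?M)"
    using L2 by (simp add: square_integrable_T_inner(1))
  also have "\<dots> \<ge> 0"
    using assms by (intro add_nonneg_nonneg integral_T_inner_px_nonneg integral_T_inner_py_nonneg) simp_all
  finally show ?thesis .
qed

end
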